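(* Let $N,d\in\mathbb N$, let $D$ be a set and $C\subseteq D$, and let $b_0,\ldots,b_N:D\to\mathbb R$ satisfy $b_k(\mathbf x)\ge0$ and $\sum_{k=0}^N b_k(\mathbf x)=1$ for all $\mathbf x\in C$. Let $\omega_0,\ldots,\omega_N>0$ and $\mathbf W_0,\ldots,\mathbf W_N\in\mathbb R^d$, and set $\mathbf S_N(\mathbf x):=\frac{\sum_{k=0}^N\omega_k\mathbf W_kb_k(\mathbf x)}{\sum_{k=0}^N\omega_kb_k(\mathbf x)}$ for $\mathbf x\in C$. Fix $\mathbf t,\mathbf u\in C$ with $b_k(\mathbf t)>0$ and $b_k(\mathbf u)>0$ for $1\le k\le N$. Define $h_0:=1$, $\mathbf Q_0:=\mathbf W_0$ and, for $k=1,\ldots,N$, $$h_k:=\left(1+\frac{\omega_{k-1}b_{k-1}(\mathbf t)}{h_{k-1}\,\omega_k b_k(\mathbf t)}\right)^{-1},\qquad \mathbf Q_k:=(1-h_k)\mathbf Q_{k-1}+h_k\mathbf W_k .$$ Assume $h_k\neq0$ for $1\le k\le N$, and suppose $$\frac{b_k(\mathbf t)}{b_{k+1}(\mathbf t)}\le\frac{b_k(\mathbf u)}{b_{k+1}(\mathbf u)}\qquad(0\le k\le N-1).$$ Then $\mathbf S_N(\mathbf u)\in\operatorname{conv}\{\mathbf Q_0,\mathbf Q_1,\ldots,\mathbf Q_N\}$.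
   Context: $\operatorname{conv}$ denotes the convex hull; $\mathbb E^d$ of the paper is identified with $\mathbb R^d$. *)

theory Defs
  imports "HOL-Analysis.Analysis"
begin

fun hseq :: "(nat \<Rightarrow> real) \<Rightarrow> (nat \<Rightarrow> 'a \<Rightarrow> real) \<Rightarrow> 'a \<Rightarrow> nat \<Rightarrow> real" where
  "hseq \<omega> b t 0 = 1"
| "hseq \<omega> b t (Suc k) =
     inverse (1 + (\<omega> k * b k t) / (hseq \<omega> b t k * \<omega> (Suc k) * b (Suc k) t))"

fun Qseq :: "(nat \<Rightarrow> real) \<Rightarrow> (nat \<Rightarrow> 'a \<Rightarrow> real) \<Rightarrow> (nat \<Rightarrow> 'v::real_vector) \<Rightarrow> 'a \<Rightarrow> nat \<Rightarrow> 'v" where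
  "Qseq \<omega> b W t 0 = W 0"
| "Qseq \<omega> b W t (Suc k) =
     (1 - hseq \<omega> b t (Suc k)) *\<^sub>R Qseq \<omega> b W t k + hseq \<omega> b t (Suc k) *\<^sub>R W (Suc k)"

definition SN :: "nat \<Rightarrow> (nat \<Rightarrow> real) \<Rightarrow> (nat \<Rightarrow> 'a \<Rightarrow> real) \<Rightarrow> (nat \<Rightarrow> 'v::real_vector) \<Rightarrow> 'a \<Rightarrow> 'v" where
  "SN N \<omega> b W x = inverse (\<Sum>k\<le>N. \<omega> k * b k x) *\<^sub>R (\<Sum>k\<le>N. (\<omega> k * b k x) *\<^sub>R W k)"

end

theory Submission
  imports Defs
begin

text \<open>Write c_k = \<omega>_k b_k(t) and d_k = \<omega>_k b_k(u). The recursion gives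
  h_k = c_k / (c_0 + ... + c_k), hence (c_0 + ... + c_k) Q_k = c_0 W_0 + ... + c_k W_k:
  Q_k is the c-weighted mean of W_0, ..., W_k. The ratio hypothesis says that r_k = d_k / c_k
  is nonincreasing, so Abel summation writes \<Sum> d_k W_k as a combination of these prefix sums
  with the nonnegative coefficients r_k - r_(k+1), of total weight \<Sum> d_k. Dividing by \<Sum> d_k
  gives a convex combination of the Q_k.\<close>

lemma prefix_sum_nonneg:
  fixes c :: "nat \<Rightarrow> real"
  assumes "0 \<le> c 0" and "\<And>k. 1 \<le> k \<Longrightarrow> k \<le> n \<Longrightarrow> 0 < c k" and "k \<le> n"
  shows "0 \<le> (\<Sum>j\<le>k. c j)"
proof (rule sum_nonneg)
  fix j assume "j \<in> {..k}"
  then show "0 \<le> c j"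
    using assms(1) assms(2)[of j] \<open>k \<le> n\<close> by (cases "j = 0") auto
qed

lemma weight_div_hseq:
  assumes "0 \<le> \<omega> 0 * b 0 t"
    and "\<And>k. 1 \<le> k \<Longrightarrow> k \<le> n \<Longrightarrow> 0 < \<omega> k * b k t"
    and "k \<le> n"
  shows "\<omega> k * b k t / hseq \<omega> b t k = (\<Sum>j\<le>k. \<omega> j * b j t)"
  using \<open>k \<le> n\<close>
proof (induction k)
  case 0
  then show ?case by simp
next
  case (Suc k)
  define c where "c j = \<omega> j * b j t" for j
  define A where "A j = (\<Sum>i\<le>j. c i)" for j
  have IH: "c k / hseq \<omega> b t k = A k"
    using Suc by (simp add: c_def A_def)
  have c_Suc: "0 < c (Suc k)"
    using assms(2) Suc.prems by (simp add: c_def)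
  have A_nonneg: "0 \<le> A k"
    using prefix_sum_nonneg[of c n k] assms Suc.prems by (simp add: A_def c_def)
  have "hseq \<omega> b t (Suc k) = inverse (1 + (c k / hseq \<omega> b t k) / c (Suc k))"
    by (simp add: c_def mult.assoc)
  also have "\<dots> = c (Suc k) / (A k + c (Suc k))"
    using IH c_Suc A_nonneg by (simp add: field_simps)
  also have "\<dots> = c (Suc k) / A (Suc k)"
    by (simp add: A_def add.commute)
  finally have "c (Suc k) / hseq \<omega> b t (Suc k) = A (Suc k)"
    using c_Suc A_nonneg by (simp add: A_def)
  then show ?case
    by (simp add: c_def A_def)
qed

lemma prefix_sum_scaleR_Qseq:
  assumes "0 \<le> \<omega> 0 * b 0 t"
    and "\<And>k. 1 \<le> k \<Longrightarrow> k \<le> n \<Longrightarrow> 0 < \<omega> k * b k t"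
    and "k \<le> n"
  shows "(\<Sum>j\<le>k. \<omega> j * b j t) *\<^sub>R Qseq \<omega> b W t k = (\<Sum>j\<le>k. (\<omega> j * b j t) *\<^sub>R W j)"
  using \<open>k \<le> n\<close>
proof (induction k)
  case 0
  then show ?case by simp
next
  case (Suc k)
  define c where "c j = \<omega> j * b j t" for j
  define A where "A j = (\<Sum>i\<le>j. c i)" for j
  define h where "h = hseq \<omega> b t (Suc k)"
  have c_Suc: "0 < c (Suc k)"
    using assms(2) Suc.prems by (simp add: c_def)
  have "0 \<le> A k"
    using prefix_sum_nonneg[of c n k] assms Suc.prems by (simp add: A_def c_def)
  then have A_pos: "0 < A (Suc k)"
    using c_Suc by (simp add: A_def)
  have c_div_h: "c (Suc k) / h = A (Suc k)"
    using weight_div_hseq[of \<omega> b t n "Suc k", OF assms(1,2) Suc.prems] by (simp add: c_def A_def h_def)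
  with A_pos have "h \<noteq> 0"
    by auto
  with c_div_h have A_h: "A (Suc k) * h = c (Suc k)"
    by (simp add: field_simps)
  have "A (Suc k) *\<^sub>R Qseq \<omega> b W t (Suc k)
      = (A (Suc k) - A (Suc k) * h) *\<^sub>R Qseq \<omega> b W t k + (A (Suc k) * h) *\<^sub>R W (Suc k)"
    by (simp add: h_def algebra_simps)
  also have "\<dots> = A k *\<^sub>R Qseq \<omega> b W t k + c (Suc k) *\<^sub>R W (Suc k)"
    using A_h by (simp add: A_def)
  finally show ?case
    using Suc by (simp add: c_def A_def)
qed

lemma sum_scaleR_by_parts:
  fixes r :: "nat \<Rightarrow> real" and X :: "nat \<Rightarrow> 'v::real_vector"
  shows "(\<Sum>k=1..n. r k *\<^sub>R X k)
       = (\<Sum>k=1..n. (r k - r (Suc k)) *\<^sub>R (\<Sum>j\<le>k. X j)) - r 1 *\<^sub>R X 0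
         + r (Suc n) *\<^sub>R (\<Sum>j\<le>n. X j)"
  by (induction n) (simp_all add: algebra_simps)

lemma sum_scaleR_eq_combination_of_prefix_means:
  fixes c d r :: "nat \<Rightarrow> real" and W P :: "nat \<Rightarrow> 'v::real_vector"
  assumes d_eq: "\<And>k. 1 \<le> k \<Longrightarrow> k \<le> N \<Longrightarrow> d k = r k * c k"
    and r_Suc_N: "r (Suc N) = 0"
    and P0: "P 0 = W 0"
    and P: "\<And>k. 1 \<le> k \<Longrightarrow> k \<le> N \<Longrightarrow> (\<Sum>j\<le>k. c j) *\<^sub>R P k = (\<Sum>j\<le>k. c j *\<^sub>R W j)"
  shows "(\<Sum>k\<le>N. d k *\<^sub>R W k)
       = (d 0 - r 1 * c 0) *\<^sub>R P 0 + (\<Sum>k=1..N. ((r k - r (Suc k)) * (\<Sum>j\<le>k. c j)) *\<^sub>R P k)"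
proof -
  have "(\<Sum>k\<le>N. d k *\<^sub>R W k) = d 0 *\<^sub>R W 0 + (\<Sum>k=1..N. r k *\<^sub>R (c k *\<^sub>R W k))"
    using d_eq by (simp add: atMost_atLeast0 sum.atLeast_Suc_atMost)
  also have "(\<Sum>k=1..N. r k *\<^sub>R (c k *\<^sub>R W k))
      = (\<Sum>k=1..N. (r k - r (Suc k)) *\<^sub>R (\<Sum>j\<le>k. c j *\<^sub>R W j)) - r 1 *\<^sub>R (c 0 *\<^sub>R W 0)"
    using sum_scaleR_by_parts[of r "\<lambda>k. c k *\<^sub>R W k" N] r_Suc_N by simp
  also have "(\<Sum>k=1..N. (r k - r (Suc k)) *\<^sub>R (\<Sum>j\<le>k. c j *\<^sub>R W j))
      = (\<Sum>k=1..N. ((r k - r (Suc k)) * (\<Sum>j\<le>k. c j)) *\<^sub>R P k)"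
    using P by (intro sum.cong) (simp_all flip: scaleR_scaleR)
  finally show ?thesis
    using P0 by (simp add: algebra_simps)
qed

lemma inverse_sum_scaleR_in_convex_hull:
  fixes \<mu> :: "'i \<Rightarrow> real" and P :: "'i \<Rightarrow> 'v::real_vector"
  assumes "finite I" and "\<And>i. i \<in> I \<Longrightarrow> 0 \<le> \<mu> i" and "0 < sum \<mu> I"
  shows "inverse (sum \<mu> I) *\<^sub>R (\<Sum>i\<in>I. \<mu> i *\<^sub>R P i) \<in> convex hull (P ` I)"
proof -
  have "(\<Sum>i\<in>I. (\<mu> i / sum \<mu> I) *\<^sub>R P i) \<in> convex hull (P ` I)"
    using assms by (intro convex_sum convex_convex_hull hull_inc)
      (auto simp flip: sum_divide_distrib)
  then show ?thesis
    by (simp add: scaleR_sum_right divide_inverse_commute)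
qed

lemma mean_in_convex_hull_of_prefix_means:
  fixes c d :: "nat \<Rightarrow> real" and W P :: "nat \<Rightarrow> 'v::real_vector"
  assumes c0: "0 \<le> c 0" and c_pos: "\<And>k. 1 \<le> k \<Longrightarrow> k \<le> N \<Longrightarrow> 0 < c k"
    and d_nonneg: "\<And>k. k \<le> N \<Longrightarrow> 0 \<le> d k"
    and ratio_antimono: "\<And>k. k < N \<Longrightarrow> d (Suc k) * c k \<le> d k * c (Suc k)"
    and sum_d_pos: "0 < (\<Sum>k\<le>N. d k)"
    and P0: "P 0 = W 0"
    and P: "\<And>k. 1 \<le> k \<Longrightarrow> k \<le> N \<Longrightarrow> (\<Sum>j\<le>k. c j) *\<^sub>R P k = (\<Sum>j\<le>k. c j *\<^sub>R W j)"
  shows "inverse (\<Sum>k\<le>N. d k) *\<^sub>R (\<Sum>k\<le>N. d k *\<^sub>R W k) \<in> convex hull (P ` {0..N})"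
proof -
  define r where "r k = (if 1 \<le> k \<and> k \<le> N then d k / c k else 0)" for k
  define \<nu> where "\<nu> k = (if k = 0 then d 0 - r 1 * c 0 else (r k - r (Suc k)) * (\<Sum>j\<le>k. c j))"
    for k
  have d_eq: "d k = r k * c k" if "1 \<le> k" "k \<le> N" for k
    using c_pos[OF that] that by (simp add: r_def)
  have r_Suc_N: "r (Suc N) = 0"
    by (simp add: r_def)
  have r_antimono: "r (Suc k) \<le> r k" if "1 \<le> k" "k \<le> N" for k
  proof (cases "k = N")
    case True
    then show ?thesis
      using that c_pos[OF that] d_nonneg[of k] by (simp add: r_def)
  next
    case False
    then show ?thesis
      using that c_pos[of k] c_pos[of "Suc k"] ratio_antimono[of k]
      by (simp add: r_def divide_simps mult.commute)
  qed
  have \<nu>_nonneg: "0 \<le> \<nu> k" if "k \<in> {0..N}" for k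
  proof (cases "k = 0")
    case True
    have "r 1 * c 0 \<le> d 0"
    proof (cases "N = 0")
      case True
      then show ?thesis using d_nonneg by (simp add: r_def)
    next
      case False
      then show ?thesis
        using c_pos[of 1] ratio_antimono[of 0] by (simp add: r_def divide_simps mult.commute)
    qed
    with True show ?thesis by (simp add: \<nu>_def)
  next
    case False
    have "0 \<le> (\<Sum>j\<le>k. c j)"
      using prefix_sum_nonneg[of c N k, OF c0 c_pos] that by simp
    with False r_antimono[of k] that show ?thesis by (simp add: \<nu>_def)
  qed
  have sum_split: "(\<Sum>k\<in>{0..N}. f k) = f 0 + (\<Sum>k=1..N. f k)" for f :: "nat \<Rightarrow> 'w::comm_monoid_add"
    by (simp add: sum.atLeast_Suc_atMost)
  have "(\<Sum>k\<le>N. d k *\<^sub>R W k) = (\<Sum>k\<in>{0..N}. \<nu> k *\<^sub>R P k)"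
    using sum_scaleR_eq_combination_of_prefix_means[OF d_eq r_Suc_N P0 P]
    by (simp add: sum_split \<nu>_def)
  moreover have "(\<Sum>k\<le>N. d k) = (\<Sum>k\<in>{0..N}. \<nu> k)"
    using sum_scaleR_eq_combination_of_prefix_means[of N d r c "\<lambda>_. 1 :: real" "\<lambda>_. 1", OF d_eq r_Suc_N]
    by (simp add: sum_split \<nu>_def sum_distrib_right)
  ultimately show ?thesis
    using inverse_sum_scaleR_in_convex_hull[of "{0..N}" \<nu> P] \<nu>_nonneg sum_d_pos by simp
qed

theorem theorem2:
  fixes N :: nat and D C :: "'a set"
    and b :: "nat \<Rightarrow> 'a \<Rightarrow> real" and \<omega> :: "nat \<Rightarrow> real"
    and W :: "nat \<Rightarrow> real ^ 'd" and t u :: 'a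
  assumes "C \<subseteq> D"
    and b_nonneg: "\<And>k x. k \<le> N \<Longrightarrow> x \<in> C \<Longrightarrow> b k x \<ge> 0"
    and b_sum: "\<And>x. x \<in> C \<Longrightarrow> (\<Sum>k\<le>N. b k x) = 1"
    and \<omega>_pos: "\<And>k. k \<le> N \<Longrightarrow> \<omega> k > 0"
    and "t \<in> C" and "u \<in> C"
    and bt_pos: "\<And>k. 1 \<le> k \<Longrightarrow> k \<le> N \<Longrightarrow> b k t > 0"
    and bu_pos: "\<And>k. 1 \<le> k \<Longrightarrow> k \<le> N \<Longrightarrow> b k u > 0"
    and "\<And>k. 1 \<le> k \<Longrightarrow> k \<le> N \<Longrightarrow> hseq \<omega> b t k \<noteq> 0"
    and ratio: "\<And>k. k + 1 \<le> N \<Longrightarrow> b k t / b (k + 1) t \<le> b k u / b (k + 1) u"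
  shows "SN N \<omega> b W u \<in> convex hull (Qseq \<omega> b W t ` {0..N})"
proof -
  have c0: "0 \<le> \<omega> 0 * b 0 t"
    using b_nonneg[of 0 t] \<omega>_pos[of 0] \<open>t \<in> C\<close> by simp
  have c_pos: "0 < \<omega> k * b k t" if "1 \<le> k" "k \<le> N" for k
    using bt_pos[OF that] \<omega>_pos[of k] that by simp
  have Qseq_mean: "(\<Sum>j\<le>k. \<omega> j * b j t) *\<^sub>R Qseq \<omega> b W t k = (\<Sum>j\<le>k. (\<omega> j * b j t) *\<^sub>R W j)"
    if "k \<le> N" for k
    using prefix_sum_scaleR_Qseq[of \<omega> b t N k, OF c0 c_pos that] .
  have ratio_antimono: "(\<omega> (Suc k) * b (Suc k) u) * (\<omega> k * b k t)
      \<le> (\<omega> k * b k u) * (\<omega> (Suc k) * b (Suc k) t)" if "k < N" for k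
  proof -
    have "b k t * b (Suc k) u \<le> b k u * b (Suc k) t"
      using ratio[of k] bt_pos[of "Suc k"] bu_pos[of "Suc k"] that by (simp add: divide_simps)
    then show ?thesis
      using mult_left_mono[of _ _ "\<omega> k * \<omega> (Suc k)"] \<omega>_pos[of k] \<omega>_pos[of "Suc k"] that
      by (simp add: ac_simps)
  qed
  have d_nonneg: "0 \<le> \<omega> k * b k u" if "k \<le> N" for k
    using b_nonneg[OF that \<open>u \<in> C\<close>] \<omega>_pos[OF that] by simp
  have "\<not> (\<forall>k\<le>N. b k u \<le> 0)"
    using b_sum[OF \<open>u \<in> C\<close>] sum_nonpos[of "{..N}" "\<lambda>k. b k u"] by auto
  then obtain i where "i \<le> N" "0 < b i u"
    by (auto simp: not_le)
  then have "0 < (\<Sum>k\<le>N. \<omega> k * b k u)"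
    using d_nonneg \<omega>_pos[of i] by (intro sum_pos2[of _ i]) auto
  then show ?thesis
    unfolding SN_def
    using c0 c_pos d_nonneg ratio_antimono
    by (intro mean_in_convex_hull_of_prefix_means[where c = "\<lambda>k. \<omega> k * b k t"])
      (auto intro: Qseq_mean)
qed

end
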